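(* Let $G^1$ and $G^2$ be orable graphs. Then their Cartesian product $G^1\times G^2$ is orable.
   Context: A graph is a tuple $\langle V,s_1,s_2,\mathsf{null},\mathsf{root}\rangle$ with $V$ finite, $\mathsf{root}\neq\mathsf{null}$ in $V$, $s_1,s_2\subseteq V\times V$, and $\langle\mathsf{null},x\rangle\in s_i$ iff $x=\mathsf{null}$. A graph is orable if for all nodes $x$: $\langle\mathsf{root},x\rangle\in s_2$ iff $x=\mathsf{null}$. For $G^j=\langle V^j,s^j_1,s^j_2,\mathsf{null}^j,\mathsf{root}^j\rangle$ ($j=1,2$), the Cartesian product $G^1\times G^2=\langle V^0,s^0_1,s^0_2,\mathsf{null}^0,\mathsf{root}^0\rangle$ has $\mathsf{null}^0=\langle\mathsf{null}^1,\mathsf{null}^2\rangle$, $\mathsf{root}^0=\langle\mathsf{root}^1,\mathsf{root}^2\rangle$, $V^0=\{\mathsf{null}^0,\mathsf{root}^0\}\cup(V^1\setminus\{\mathsf{null}^1,\mathsf{root}^1\})\times(V^2\setminus\{\mathsf{null}^2,\mathsf{root}^2\})$, and $s^0_i$ is the set of pairs $\langle\langle x^1,x^2\rangle,\langle y^1,y^2\rangle\rangle$ of elements of $V^0$ with $\langle x^1,y^1\rangle\in s^1_i$ and $\langle x^2,y^2\rangle\in s^2_i$. *)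

theory Defs
  imports Main
begin

record 'v graph =
  V :: "'v set"
  s1 :: "('v \<times> 'v) set"
  s2 :: "('v \<times> 'v) set"
  null :: 'v
  root :: 'v

definition is_graph :: "'v graph \<Rightarrow> bool" where
  "is_graph G \<longleftrightarrow>
     finite (V G) \<and> null G \<in> V G \<and> root G \<in> V G \<and> root G \<noteq> null G \<and>
     s1 G \<subseteq> V G \<times> V G \<and> s2 G \<subseteq> V G \<times> V G \<and>
     (\<forall>x. (null G, x) \<in> s1 G \<longleftrightarrow> x = null G) \<and>
     (\<forall>x. (null G, x) \<in> s2 G \<longleftrightarrow> x = null G)"

definition orable :: "'v graph \<Rightarrow> bool" where
  "orable G \<longleftrightarrow> is_graph G \<and> (\<forall>x. (root G, x) \<in> s2 G \<longleftrightarrow> x = null G)"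

definition cart_prod :: "'a graph \<Rightarrow> 'b graph \<Rightarrow> ('a \<times> 'b) graph" where
  "cart_prod G1 G2 =
    (let N = (null G1, null G2); R = (root G1, root G2);
         V0 = {N, R} \<union> (V G1 - {null G1, root G1}) \<times> (V G2 - {null G2, root G2})
     in \<lparr> V = V0,
          s1 = {(x, y). x \<in> V0 \<and> y \<in> V0 \<and> (fst x, fst y) \<in> s1 G1 \<and> (snd x, snd y) \<in> s1 G2},
          s2 = {(x, y). x \<in> V0 \<and> y \<in> V0 \<and> (fst x, fst y) \<in> s2 G1 \<and> (snd x, snd y) \<in> s2 G2},
          null = N, root = R \<rparr>)"

end

theory Submission
  imports Defs
begin

lemma cart_prod_simps [simp]:
  "null (cart_prod G1 G2) = (null G1, null G2)"
  "root (cart_prod G1 G2) = (root G1, root G2)"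
  "V (cart_prod G1 G2) =
     {(null G1, null G2), (root G1, root G2)} \<union>
     (V G1 - {null G1, root G1}) \<times> (V G2 - {null G2, root G2})"
  "(x, y) \<in> s1 (cart_prod G1 G2) \<longleftrightarrow>
     x \<in> V (cart_prod G1 G2) \<and> y \<in> V (cart_prod G1 G2) \<and>
     (fst x, fst y) \<in> s1 G1 \<and> (snd x, snd y) \<in> s1 G2"
  "(x, y) \<in> s2 (cart_prod G1 G2) \<longleftrightarrow>
     x \<in> V (cart_prod G1 G2) \<and> y \<in> V (cart_prod G1 G2) \<and>
     (fst x, fst y) \<in> s2 G1 \<and> (snd x, snd y) \<in> s2 G2"
  by (simp_all add: cart_prod_def Let_def)

lemma is_graph_cart_prod:
  assumes "is_graph G1" and "is_graph G2"
  shows "is_graph (cart_prod G1 G2)"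
proof -
  from assms have null_s1: "(null G1, x1) \<in> s1 G1 \<longleftrightarrow> x1 = null G1"
    and null_s2: "(null G1, x1) \<in> s2 G1 \<longleftrightarrow> x1 = null G1"
    and null_s1': "(null G2, x2) \<in> s1 G2 \<longleftrightarrow> x2 = null G2"
    and null_s2': "(null G2, x2) \<in> s2 G2 \<longleftrightarrow> x2 = null G2" for x1 x2
    unfolding is_graph_def by blast+
  have "finite (V (cart_prod G1 G2))"
    and "null (cart_prod G1 G2) \<in> V (cart_prod G1 G2)"
    and "root (cart_prod G1 G2) \<in> V (cart_prod G1 G2)"
    and "root (cart_prod G1 G2) \<noteq> null (cart_prod G1 G2)"
    using assms by (simp_all add: is_graph_def)
  moreover have "s1 (cart_prod G1 G2) \<subseteq> V (cart_prod G1 G2) \<times> V (cart_prod G1 G2)"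
    and "s2 (cart_prod G1 G2) \<subseteq> V (cart_prod G1 G2) \<times> V (cart_prod G1 G2)"
    by (auto simp del: cart_prod_simps(3))
  moreover have
    "(null (cart_prod G1 G2), x) \<in> s1 (cart_prod G1 G2) \<longleftrightarrow> x = null (cart_prod G1 G2)"
    "(null (cart_prod G1 G2), x) \<in> s2 (cart_prod G1 G2) \<longleftrightarrow> x = null (cart_prod G1 G2)"
    for x
    by (cases x; auto simp: null_s1 null_s2 null_s1' null_s2')+
  ultimately show ?thesis
    unfolding is_graph_def by blast
qed

lemma cart_prod_root_s2_iff:
  assumes "orable G1" and "orable G2"
  shows "(root (cart_prod G1 G2), x) \<in> s2 (cart_prod G1 G2) \<longleftrightarrow> x = null (cart_prod G1 G2)"
proof -
  from assms have root_s2: "(root G1, x1) \<in> s2 G1 \<longleftrightarrow> x1 = null G1"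
    and root_s2': "(root G2, x2) \<in> s2 G2 \<longleftrightarrow> x2 = null G2" for x1 x2
    unfolding orable_def by blast+
  from assms have "null G1 \<noteq> root G1" and "null G2 \<noteq> root G2"
    unfolding orable_def is_graph_def by auto
  then show ?thesis
    by (cases x) (auto simp: root_s2 root_s2')
qed

theorem proposition31:
  fixes G1 :: "'a graph" and G2 :: "'b graph"
  assumes "orable G1" and "orable G2"
  shows "orable (cart_prod G1 G2)"
proof -
  have "is_graph (cart_prod G1 G2)"
    using assms by (intro is_graph_cart_prod) (simp_all add: orable_def)
  with cart_prod_root_s2_iff [OF assms] show ?thesis
    unfolding orable_def by blast
qed

end
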